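(* For any prime $p$ and positive integer $n$, \[ \frac{\mathfrak{C}_2(\mathbb{Z}/p^n \mathbb{Z}) }{p^{6n}}= \left(1+\frac{1}{p}\right)\left(1-\frac{1}{p^2}\right)^{-1}\left(1-\frac{1}{p^3}\right)\left(1-\frac{1}{p^{2\lceil n/2\rceil}}\right) + O(n^2p^{-n/2}), \] with an absolute implied constant. In particular, the limit \[ \sigma_p = \lim_{n\to\infty} \frac{\mathfrak{C}_2(\mathbb{Z}/p^n \mathbb{Z}) }{p^{6n}} = \left(1+\frac{1}{p}\right)\left(1-\frac{1}{p^2}\right)^{-1}\left(1-\frac{1}{p^3}\right) \] exists.
   Context: For a prime $p$ and positive integer $n$, $\mathrm{Mat}_2(\mathbb{Z}/p^n\mathbb{Z})$ is the set of $2\times 2$ matrices with entries in $\mathbb{Z}/p^n\mathbb{Z}$, and $\mathfrak{C}_2(\mathbb{Z}/p^n \mathbb{Z})$ is the number of pairs $(A,B)\in \mathrm{Mat}_2(\mathbb{Z}/p^n\mathbb{Z})^2$ with $AB=BA$. *)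

theory Defs
  imports Complex_Main "HOL-Computational_Algebra.Primes"
begin

text \<open>A 2x2 matrix [[a,b],[c,d]] is represented by the tuple (a,b,c,d).
  Elements of Z/mZ are represented by integers in {0..<m}.\<close>
type_synonym mat2 = "int \<times> int \<times> int \<times> int"

definition mat2_mult :: "mat2 \<Rightarrow> mat2 \<Rightarrow> mat2" where
  "mat2_mult A B = (case A of (a,b,c,d) \<Rightarrow> case B of (e,f,g,h) \<Rightarrow>
      (a*e + b*g, a*f + b*h, c*e + d*g, c*f + d*h))"

definition mat2_mod :: "int \<Rightarrow> mat2 \<Rightarrow> mat2" where
  "mat2_mod m A = (case A of (a,b,c,d) \<Rightarrow> (a mod m, b mod m, c mod m, d mod m))"

definition Mat2_mod :: "int \<Rightarrow> mat2 set" where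
  "Mat2_mod m = {0..<m} \<times> {0..<m} \<times> {0..<m} \<times> {0..<m}"

definition commuting_count :: "nat \<Rightarrow> nat \<Rightarrow> nat" where
  "commuting_count p n = (let m = int (p ^ n) in
     card {(A, B). A \<in> Mat2_mod m \<and> B \<in> Mat2_mod m \<and>
                   mat2_mod m (mat2_mult A B) = mat2_mod m (mat2_mult B A)})"

definition sigma_main :: "nat \<Rightarrow> real" where
  "sigma_main p = (1 + 1 / real p) * inverse (1 - 1 / real p ^ 2) * (1 - 1 / real p ^ 3)"

end

theory Submission
  imports Defs
begin

text \<open>Whether A and B commute depends only on A and B modulo scalar matrices. Encoding
  A - d I = [[a - d, b], [c, 0]] as the vector u = (a - d, b, c), and B likewise as v, the pair
  commutes modulo m iff the cross product u x v vanishes modulo m. So the number of commuting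
  pairs is m^2 N(m), where N(m) counts the pairs (u, v) in (Z/mZ)^3 with u x v = 0.
  Let m = p^(n+1). If u is nonzero modulo p, one of its coordinates is a unit, and the solutions v
  are exactly the m multiples of u. If u = p u', the condition becomes u' x v = 0 modulo p^n,
  and each solution modulo p^n has p^3 lifts. Hence
  N(p^(n+1)) = p^(n+1) (p^(3n+3) - p^(3n)) + p^3 N(p^n), which solves to the exact density
  sigma_p - (p + 1) / p^(n+2); the error term of the theorem absorbs the difference.\<close>

type_synonym vec3 = "int \<times> int \<times> int"

definition cross3 :: "vec3 \<Rightarrow> vec3 \<Rightarrow> vec3" where
  "cross3 u v = (case u of (u1,u2,u3) \<Rightarrow> case v of (v1,v2,v3) \<Rightarrow>
     (u2*v3 - u3*v2, u3*v1 - u1*v3, u1*v2 - u2*v1))"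

definition vec3_dvd :: "int \<Rightarrow> vec3 \<Rightarrow> bool" where
  "vec3_dvd m u = (case u of (a,b,c) \<Rightarrow> m dvd a \<and> m dvd b \<and> m dvd c)"

abbreviation vec3_map :: "(int \<Rightarrow> int) \<Rightarrow> vec3 \<Rightarrow> vec3" where
  "vec3_map f \<equiv> map_prod f (map_prod f f)"

definition Vec3_mod :: "int \<Rightarrow> vec3 set" where
  "Vec3_mod m = {0..<m} \<times> {0..<m} \<times> {0..<m}"

definition Parallels :: "int \<Rightarrow> vec3 \<Rightarrow> vec3 set" where
  "Parallels m u = {v \<in> Vec3_mod m. vec3_dvd m (cross3 u v)}"

definition Parallel_pairs :: "int \<Rightarrow> (vec3 \<times> vec3) set" where
  "Parallel_pairs m = (SIGMA u:Vec3_mod m. Parallels m u)"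

lemma finite_Vec3_mod [simp]: "finite (Vec3_mod m)"
  by (simp add: Vec3_mod_def)

lemma Parallels_subset: "Parallels m u \<subseteq> Vec3_mod m"
  by (auto simp: Parallels_def)

lemma finite_Parallels [simp]: "finite (Parallels m u)"
  by (simp add: Parallels_def)

lemma card_Parallel_pairs_eq_sum: "card (Parallel_pairs m) = (\<Sum>u\<in>Vec3_mod m. card (Parallels m u))"
  by (simp add: Parallel_pairs_def card_SigmaI)

lemma card_Vec3_mod: "card (Vec3_mod m) = nat m ^ 3"
  by (simp add: Vec3_mod_def card_cartesian_product power3_eq_cube)

lemma vec3_dvd_cross3_cong:
  assumes "vec3_map (\<lambda>x. x mod m) u = vec3_map (\<lambda>x. x mod m) u'"
    and "vec3_map (\<lambda>x. x mod m) v = vec3_map (\<lambda>x. x mod m) v'"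
  shows "vec3_dvd m (cross3 u v) \<longleftrightarrow> vec3_dvd m (cross3 u' v')"
proof -
  have "vec3_map (\<lambda>x. x mod m) (cross3 u v) = vec3_map (\<lambda>x. x mod m) (cross3 u' v')"
    using assms by (auto simp: cross3_def split: prod.splits
        intro!: mod_diff_cong mod_mult_cong)
  then show ?thesis
    by (auto simp: vec3_dvd_def dvd_eq_mod_eq_0 split: prod.splits)
qed

lemma mat2_commute_mod_iff_cross3:
  "mat2_mod m (mat2_mult (a,b,c,d) (e,f,g,h)) = mat2_mod m (mat2_mult (e,f,g,h) (a,b,c,d))
   \<longleftrightarrow> vec3_dvd m (cross3 (a - d, b, c) (e - h, f, g))"
proof -
  have "a*e + b*g - (e*a + f*c) = b*g - c*f" "c*f + d*h - (g*b + h*d) = - (b*g - c*f)"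
       "a*f + b*h - (e*b + f*d) = (a-d)*f - b*(e-h)" "c*e + d*g - (g*a + h*c) = c*(e-h) - (a-d)*g"
    by (simp_all add: algebra_simps)
  then show ?thesis
    unfolding mat2_mod_def mat2_mult_def prod.case prod.inject mod_eq_dvd_iff
    by (simp only: dvd_minus_iff cross3_def vec3_dvd_def prod.case) blast
qed

lemma card_commuting_pairs:
  assumes m: "m > 0"
  shows "card {(A, B). A \<in> Mat2_mod m \<and> B \<in> Mat2_mod m \<and>
                mat2_mod m (mat2_mult A B) = mat2_mod m (mat2_mult B A)}
         = card (Parallel_pairs m) * nat m ^ 2"
proof -
  let ?C = "{(A, B). A \<in> Mat2_mod m \<and> B \<in> Mat2_mod m \<and>
                mat2_mod m (mat2_mult A B) = mat2_mod m (mat2_mult B A)}"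
  have commute_iff: "mat2_mod m (mat2_mult (a,b,c,d) (e,f,g,h)) = mat2_mod m (mat2_mult (e,f,g,h) (a,b,c,d))
     \<longleftrightarrow> vec3_dvd m (cross3 ((a - d) mod m, b, c) ((e - h) mod m, f, g))" for a b c d e f g h
    unfolding mat2_commute_mod_iff_cross3
    by (rule vec3_dvd_cross3_cong) simp_all
  define F :: "mat2 \<times> mat2 \<Rightarrow> (vec3 \<times> vec3) \<times> (int \<times> int)" where
    "F = (\<lambda>((a,b,c,d),(e,f,g,h)). ((((a - d) mod m, b, c), ((e - h) mod m, f, g)), (d, h)))"
  define G :: "(vec3 \<times> vec3) \<times> (int \<times> int) \<Rightarrow> mat2 \<times> mat2" where
    "G = (\<lambda>(((x,b,c),(y,f,g)),(d,h)). (((x + d) mod m, b, c, d), ((y + h) mod m, f, g, h)))"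
  have "bij_betw F ?C (Parallel_pairs m \<times> ({0..<m} \<times> {0..<m}))"
  proof (rule bij_betw_byWitness[where f'=G])
    show "\<forall>t\<in>?C. G (F t) = t"
      by (auto simp: F_def G_def Mat2_mod_def mod_simps)
    show "\<forall>t\<in>Parallel_pairs m \<times> ({0..<m} \<times> {0..<m}). F (G t) = t"
      by (auto simp: F_def G_def Parallel_pairs_def Parallels_def Vec3_mod_def mod_simps)
    show "F ` ?C \<subseteq> Parallel_pairs m \<times> ({0..<m} \<times> {0..<m})"
      using m by (auto simp: F_def Parallel_pairs_def Parallels_def Vec3_mod_def Mat2_mod_def commute_iff)
    show "G ` (Parallel_pairs m \<times> ({0..<m} \<times> {0..<m})) \<subseteq> ?C"
      using m by (auto simp: G_def Parallel_pairs_def Parallels_def Vec3_mod_def Mat2_mod_def commute_iff mod_simps)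
  qed
  then have "card ?C = card (Parallel_pairs m \<times> ({0..<m} \<times> {0..<m}))"
    by (rule bij_betw_same_card)
  then show ?thesis
    by (simp add: card_cartesian_product power2_eq_square)
qed

lemma vec3_dvd_cross3_iff_multiple:
  assumes inv: "m dvd s * b - 1"
  shows "vec3_dvd m (cross3 (a,b,c) (x,y,z)) \<longleftrightarrow> m dvd x - s*a*y \<and> m dvd z - s*c*y"
proof
  assume "vec3_dvd m (cross3 (a,b,c) (x,y,z))"
  then have "m dvd b*z - c*y" "m dvd a*y - b*x"
    by (simp_all add: vec3_dvd_def cross3_def)
  moreover have "x - s*a*y = - s*(a*y - b*x) - (s*b - 1)*x" "z - s*c*y = s*(b*z - c*y) - (s*b - 1)*z"
    by (simp_all add: algebra_simps)
  ultimately show "m dvd x - s*a*y \<and> m dvd z - s*c*y"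
    using inv by simp
next
  assume "m dvd x - s*a*y \<and> m dvd z - s*c*y"
  moreover have "b*z - c*y = b*(z - s*c*y) + c*y*(s*b - 1)"
    "c*x - a*z = c*(x - s*a*y) - a*(z - s*c*y)"
    "a*y - b*x = - b*(x - s*a*y) - a*y*(s*b - 1)"
    by (simp_all add: algebra_simps)
  ultimately show "vec3_dvd m (cross3 (a,b,c) (x,y,z))"
    using inv by (simp add: vec3_dvd_def cross3_def)
qed

lemma card_Parallels_coprime:
  assumes m: "m > 0" and "coprime b m"
  shows "card (Parallels m (a,b,c)) = nat m"
proof -
  obtain s t where "s*b + t*m = 1"
    using bezout_int[of b m] \<open>coprime b m\<close> by (auto simp: coprime_iff_gcd_eq_1)
  then have inv: "m dvd s*b - 1"
    by (metis add_diff_cancel_left' dvd_minus_iff dvd_triv_right minus_diff_eq)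
  define F where "F = (\<lambda>y. ((s*a*y) mod m, y, (s*c*y) mod m))"
  have "Parallels m (a,b,c) = F ` {0..<m}"
    using m by (fastforce simp: Parallels_def Vec3_mod_def F_def vec3_dvd_cross3_iff_multiple[OF inv]
        mod_eq_dvd_iff[symmetric] image_iff)
  moreover have "inj_on F {0..<m}"
    by (auto simp: inj_on_def F_def)
  ultimately show ?thesis
    by (simp add: card_image)
qed

lemma card_Parallels_rotate: "card (Parallels m (a,b,c)) = card (Parallels m (b,c,a))"
proof -
  have "Parallels m (b,c,a) = (\<lambda>(x,y,z). (y,z,x)) ` Parallels m (a,b,c)"
    by (auto simp: Parallels_def Vec3_mod_def vec3_dvd_def cross3_def image_iff)
  moreover have "inj_on (\<lambda>(x,y,z). (y,z,x)) (Parallels m (a,b,c))"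
    by (auto simp: inj_on_def)
  ultimately show ?thesis
    by (simp add: card_image)
qed

lemma card_Parallels_prime_power:
  assumes p: "prime p" and u: "\<not> vec3_dvd p u"
  shows "card (Parallels (p ^ n) u) = nat (p ^ n)"
proof -
  obtain a b c where u_eq: "u = (a,b,c)"
    using prod_cases3 by blast
  have m: "p ^ n > 0"
    using p by (simp add: prime_gt_0_int)
  have coprime: "coprime x (p ^ n)" if "\<not> p dvd x" for x
    using p that by (simp add: prime_imp_coprime coprime_commute)
  consider "\<not> p dvd b" | "\<not> p dvd c" | "\<not> p dvd a"
    using u by (auto simp: u_eq vec3_dvd_def)
  then show ?thesis
  proof cases
    case 1
    then show ?thesis
      using card_Parallels_coprime[OF m coprime] by (simp add: u_eq)
  next
    case 2
    then show ?thesis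
      using card_Parallels_coprime[OF m coprime, of c b a] card_Parallels_rotate[of _ a b c]
      by (simp add: u_eq)
  next
    case 3
    then show ?thesis
      using card_Parallels_coprime[OF m coprime, of a c b]
        card_Parallels_rotate[of _ a b c] card_Parallels_rotate[of _ b c a]
      by (simp add: u_eq)
  qed
qed

lemma int_div_less_of_less_mult: "0 < (m::int) \<Longrightarrow> x < p * m \<Longrightarrow> x div m < p"
  by (smt (verit, best) div_mod_decomp_int mult_right_less_imp_less pos_mod_sign)

lemma int_add_mult_less_mult:
  assumes "0 \<le> (x::int)" "x < m" "0 \<le> i" "i < p"
  shows "x + m * i < p * m"
proof -
  have "m * i \<le> m * (p - 1)"
    using assms by (intro mult_left_mono) auto
  then show ?thesis
    using assms by (simp add: algebra_simps)
qed

lemma bij_betw_Vec3_mod_mult: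
  assumes m: "0 < m" and p: "0 < p"
  shows "bij_betw (\<lambda>v. (vec3_map (\<lambda>x. x mod m) v, vec3_map (\<lambda>x. x div m) v))
           (Vec3_mod (p * m)) (Vec3_mod m \<times> Vec3_mod p)"
  using m p
  by (intro bij_betw_byWitness[where f' = "\<lambda>(r, q). (fst r + m * fst q, fst (snd r) + m * fst (snd q),
                                                   snd (snd r) + m * snd (snd q))"])
    (auto simp: Vec3_mod_def pos_imp_zdiv_nonneg_iff int_div_less_of_less_mult int_add_mult_less_mult)

lemma card_Vec3_mod_mod_preimage:
  assumes m: "0 < m" and p: "0 < p" and S: "S \<subseteq> Vec3_mod m"
  shows "card {v \<in> Vec3_mod (p * m). vec3_map (\<lambda>x. x mod m) v \<in> S} = card S * nat p ^ 3"
proof -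
  let ?f = "\<lambda>v. (vec3_map (\<lambda>x. x mod m) v, vec3_map (\<lambda>x. x div m) v)"
  let ?A = "{v \<in> Vec3_mod (p * m). vec3_map (\<lambda>x. x mod m) v \<in> S}"
  have bij: "bij_betw ?f (Vec3_mod (p * m)) (Vec3_mod m \<times> Vec3_mod p)"
    using m p by (rule bij_betw_Vec3_mod_mult)
  have "?f ` ?A = {t \<in> ?f ` Vec3_mod (p * m). fst t \<in> S}"
    by auto
  also have "\<dots> = S \<times> Vec3_mod p"
    using bij S by (auto simp: bij_betw_def)
  finally have "card (?f ` ?A) = card (S \<times> Vec3_mod p)"
    by simp
  moreover have "inj_on ?f ?A"
    using bij by (auto simp: bij_betw_def intro: inj_on_subset)
  ultimately have "card ?A = card (S \<times> Vec3_mod p)"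
    by (simp add: card_image)
  then show ?thesis
    by (simp add: card_cartesian_product card_Vec3_mod)
qed

lemma vec3_dvd_cross3_scale:
  assumes "p \<noteq> 0"
  shows "vec3_dvd (p * m) (cross3 (vec3_map ((*) p) u) v) \<longleftrightarrow> vec3_dvd m (cross3 u v)"
proof -
  have "p*x - p*y = p*(x - y)" for x y :: int
    by (simp add: algebra_simps)
  then show ?thesis
    using assms by (cases u; cases v) (simp add: vec3_dvd_def cross3_def mult.assoc)
qed

lemma Parallels_scale:
  assumes p: "0 < p" and m: "0 < m"
  shows "Parallels (p * m) (vec3_map ((*) p) u)
         = {v \<in> Vec3_mod (p * m). vec3_map (\<lambda>x. x mod m) v \<in> Parallels m u}"
proof -
  have "vec3_dvd m (cross3 u v) \<longleftrightarrow> vec3_dvd m (cross3 u (vec3_map (\<lambda>x. x mod m) v))" for v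
    by (cases v) (rule vec3_dvd_cross3_cong; simp)
  moreover have "vec3_map (\<lambda>x. x mod m) v \<in> Vec3_mod m" for v
    using m by (cases v) (simp add: Vec3_mod_def)
  ultimately show ?thesis
    using p by (auto simp: Parallels_def vec3_dvd_cross3_scale)
qed

lemma Vec3_mod_multiples:
  assumes p: "0 < p"
  shows "{u \<in> Vec3_mod (p * m). vec3_dvd p u} = vec3_map ((*) p) ` Vec3_mod m"
    and "inj_on (vec3_map ((*) p)) (Vec3_mod m)"
proof -
  let ?D = "{x \<in> {0..<p * m}. p dvd x}"
  have D: "(*) p ` {0..<m} = ?D"
    using p by (auto simp: image_iff zero_le_mult_iff)
  have "{u \<in> Vec3_mod (p * m). vec3_dvd p u} = ?D \<times> ?D \<times> ?D"
    by (auto simp: Vec3_mod_def vec3_dvd_def)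
  also have "\<dots> = vec3_map ((*) p) ` Vec3_mod m"
    unfolding Vec3_mod_def by (simp add: map_prod_surj_on D)
  finally show "{u \<in> Vec3_mod (p * m). vec3_dvd p u} = vec3_map ((*) p) ` Vec3_mod m" .
  show "inj_on (vec3_map ((*) p)) (Vec3_mod m)"
    using p by (auto simp: inj_on_def)
qed

lemma sum_card_Parallels_multiples:
  assumes p: "0 < p" and m: "0 < m"
  shows "(\<Sum>u\<in>{u \<in> Vec3_mod (p * m). vec3_dvd p u}. card (Parallels (p * m) u))
         = card (Parallel_pairs m) * nat p ^ 3"
proof -
  have "(\<Sum>u\<in>{u \<in> Vec3_mod (p * m). vec3_dvd p u}. card (Parallels (p * m) u))
        = (\<Sum>u\<in>Vec3_mod m. card (Parallels (p * m) (vec3_map ((*) p) u)))"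
    using p by (simp add: Vec3_mod_multiples sum.reindex)
  also have "\<dots> = (\<Sum>u\<in>Vec3_mod m. card (Parallels m u) * nat p ^ 3)"
    using p m by (intro sum.cong refl)
      (simp add: Parallels_scale card_Vec3_mod_mod_preimage Parallels_subset)
  finally show ?thesis
    by (simp add: card_Parallel_pairs_eq_sum sum_distrib_right)
qed

lemma card_Vec3_mod_multiples:
  assumes "0 < p"
  shows "card {u \<in> Vec3_mod (p * m). vec3_dvd p u} = card (Vec3_mod m)"
  using assms by (simp add: Vec3_mod_multiples card_image)

lemma card_Vec3_mod_prime_power_non_multiples:
  assumes "0 < p"
  shows "real (card (Vec3_mod (int p ^ Suc n) - {u \<in> Vec3_mod (int p ^ Suc n). vec3_dvd (int p) u}))
         = real p ^ (3 * Suc n) - real p ^ (3 * n)"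
proof -
  let ?V = "Vec3_mod (int p ^ Suc n)"
  let ?D = "{u \<in> ?V. vec3_dvd (int p) u}"
  have nat_power: "nat (int p ^ k) ^ 3 = p ^ (3 * k)" for k
    by (simp add: nat_power_eq power_mult[symmetric] mult.commute)
  have card_V: "card ?V = p ^ (3 * Suc n)"
    by (simp only: card_Vec3_mod nat_power)
  have card_D: "card ?D = p ^ (3 * n)"
    using card_Vec3_mod_multiples[of "int p" "int p ^ n"] assms
    by (simp only: power_Suc card_Vec3_mod nat_power of_nat_0_less_iff)
  have "card ?D \<le> card ?V"
    by (rule card_mono) auto
  then have "real (card (?V - ?D)) = real (card ?V) - real (card ?D)"
    by (simp add: card_Diff_subset of_nat_diff)
  then show ?thesis
    unfolding card_V card_D by simp
qed

lemma card_Parallel_pairs_prime_power_Suc: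
  assumes p: "prime p"
  shows "real (card (Parallel_pairs (int p ^ Suc n)))
         = real p ^ Suc n * (real p ^ (3 * Suc n) - real p ^ (3 * n))
           + real p ^ 3 * real (card (Parallel_pairs (int p ^ n)))"
proof -
  let ?m = "int p ^ Suc n"
  let ?V = "Vec3_mod ?m"
  let ?D = "{u \<in> ?V. vec3_dvd (int p) u}"
  have p0: "0 < int p"
    using p prime_gt_0_nat by simp
  have "card (Parallel_pairs ?m) = (\<Sum>u\<in>?V. card (Parallels ?m u))"
    by (rule card_Parallel_pairs_eq_sum)
  also have "\<dots> = (\<Sum>u\<in>?V - ?D. card (Parallels ?m u)) + (\<Sum>u\<in>?D. card (Parallels ?m u))"
    by (rule sum.subset_diff) auto
  also have "(\<Sum>u\<in>?V - ?D. card (Parallels ?m u)) = (\<Sum>u\<in>?V - ?D. p ^ Suc n)"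
    using card_Parallels_prime_power[of "int p" _ "Suc n"] p
    by (intro sum.cong) (auto simp: nat_mult_distrib nat_power_eq)
  also have "(\<Sum>u\<in>?D. card (Parallels ?m u)) = card (Parallel_pairs (int p ^ n)) * p ^ 3"
    using sum_card_Parallels_multiples[OF p0, of "int p ^ n"] p0 by simp
  finally have recurrence: "card (Parallel_pairs ?m)
      = card (?V - ?D) * p ^ Suc n + card (Parallel_pairs (int p ^ n)) * p ^ 3"
    by simp
  show ?thesis
    unfolding recurrence of_nat_add of_nat_mult of_nat_power
      card_Vec3_mod_prime_power_non_multiples[OF prime_gt_0_nat[OF p]]
    by (simp add: algebra_simps)
qed

lemma card_Parallel_pairs_1: "card (Parallel_pairs 1) = 1"
proof -
  have "Parallel_pairs 1 = {((0,0,0),(0,0,0))}"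
    by (auto simp: Parallel_pairs_def Parallels_def Vec3_mod_def vec3_dvd_def)
  then show ?thesis
    by simp
qed

lemma card_Parallel_pairs_prime_power:
  assumes p: "prime p"
  shows "real p ^ 2 * real (card (Parallel_pairs (int p ^ n)))
         = real p ^ (4 * n) * (real p ^ 2 + real p + 1) - real p ^ (3 * n) * (real p + 1)"
proof (induction n)
  case 0
  then show ?case
    by (simp add: card_Parallel_pairs_1)
next
  case (Suc n)
  have "real p ^ 2 * real (card (Parallel_pairs (int p ^ Suc n)))
        = real p ^ 2 * real p ^ Suc n * (real p ^ (3 * Suc n) - real p ^ (3 * n))
          + real p ^ 3 * (real p ^ 2 * real (card (Parallel_pairs (int p ^ n))))"
    unfolding card_Parallel_pairs_prime_power_Suc[OF p] by (simp add: algebra_simps)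
  also have "\<dots> = real p ^ (4 * Suc n) * (real p ^ 2 + real p + 1) - real p ^ (3 * Suc n) * (real p + 1)"
  proof -
    have powers: "real p ^ (3 * Suc n) = real p ^ 3 * real p ^ (3 * n)"
      "real p ^ (4 * Suc n) = real p ^ 4 * real p ^ (4 * n)"
      by (simp_all add: power_add)
    have split_4n: "real p ^ (4 * n) = real p ^ n * real p ^ (3 * n)"
      by (simp flip: power_add)
    show ?thesis
      unfolding Suc.IH power_Suc powers split_4n by algebra
  qed
  finally show ?case .
qed

lemma commuting_count_eq_card_Parallel_pairs:
  assumes "prime p"
  shows "commuting_count p n = card (Parallel_pairs (int p ^ n)) * p ^ (2 * n)"
proof -
  have "0 < int p ^ n"
    using assms prime_gt_0_nat by simp
  then show ?thesis
    unfolding commuting_count_def Let_def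
    by (simp add: card_commuting_pairs nat_power_eq power_mult[symmetric] mult.commute)
qed

lemma commuting_density_eq:
  assumes p: "prime p"
  shows "real (commuting_count p n) / real p ^ (6 * n)
         = (real p ^ 2 + real p + 1) / real p ^ 2 - (real p + 1) / real p ^ (n + 2)"
proof -
  let ?x = "real p"
  let ?c = "real (card (Parallel_pairs (int p ^ n)))"
  have x: "?x > 0"
    using p prime_gt_0_nat by simp
  have "real (commuting_count p n) / ?x ^ (6 * n) = ?c * ?x ^ (2 * n) / (?x ^ (2 * n) * ?x ^ (4 * n))"
    by (simp add: commuting_count_eq_card_Parallel_pairs[OF p] flip: power_add)
  also have "\<dots> = ?x ^ 2 * ?c / (?x ^ 2 * ?x ^ (4 * n))"
    using x by simp
  also have "\<dots> = (?x ^ (4 * n) * (?x ^ 2 + ?x + 1) - ?x ^ (3 * n) * (?x + 1)) / (?x ^ 2 * ?x ^ (4 * n))"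
    by (simp only: card_Parallel_pairs_prime_power[OF p])
  also have "\<dots> = (?x ^ 2 + ?x + 1) / ?x ^ 2 - (?x + 1) / ?x ^ (n + 2)"
  proof -
    have "?x ^ (4 * n) = ?x ^ (3 * n) * ?x ^ n"
      by (simp flip: power_add)
    then show ?thesis
      using x by (simp add: field_simps power_add eval_nat_numeral)
  qed
  finally show ?thesis .
qed

lemma euler_factors_eq:
  fixes x :: real
  assumes "1 < x"
  shows "(1 + 1 / x) * inverse (1 - 1 / x ^ 2) * (1 - 1 / x ^ 3) = (x ^ 2 + x + 1) / x ^ 2"
proof -
  have x: "x \<noteq> 0" "x - 1 \<noteq> 0" "x + 1 \<noteq> 0"
    using assms by auto
  have "1 + 1 / x = (x + 1) / x" "1 - 1 / x ^ 2 = (x - 1) * (x + 1) / x ^ 2"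
    "1 - 1 / x ^ 3 = (x - 1) * (x ^ 2 + x + 1) / x ^ 3"
    using x by (simp_all add: field_simps power2_eq_square power3_eq_cube)
  then have "(1 + 1 / x) * inverse (1 - 1 / x ^ 2) * (1 - 1 / x ^ 3)
      = ((x + 1) / x) * (x ^ 2 / ((x - 1) * (x + 1))) * ((x - 1) * (x ^ 2 + x + 1) / x ^ 3)"
    by (simp add: inverse_divide)
  also have "\<dots> = ((x + 1) * (x - 1)) * (x ^ 2 * (x ^ 2 + x + 1)) / (((x + 1) * (x - 1)) * (x * x ^ 3))"
    by (simp add: field_simps)
  also have "\<dots> = (x ^ 2 * (x ^ 2 + x + 1)) / (x * x ^ 3)"
    using x by simp
  also have "\<dots> = (x ^ 2 + x + 1) / x ^ 2"
    using x by (simp add: field_simps power2_eq_square power3_eq_cube)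
  finally show ?thesis .
qed

lemma sigma_main_eq:
  assumes "1 < p"
  shows "sigma_main p = (real p ^ 2 + real p + 1) / real p ^ 2"
  using euler_factors_eq[of "real p"] assms by (simp add: sigma_main_def)

lemma commuting_density_eq_sigma_main:
  assumes "prime p"
  shows "real (commuting_count p n) / real p ^ (6 * n) = sigma_main p - (real p + 1) / real p ^ (n + 2)"
  unfolding sigma_main_eq[OF prime_gt_1_nat[OF assms]] by (rule commuting_density_eq[OF assms])

lemma commuting_density_error:
  assumes p: "prime p" and "n \<le> k"
  shows "\<bar>real (commuting_count p n) / real p ^ (6 * n) - sigma_main p * (1 - 1 / real p ^ k)\<bar>
         \<le> 3 / real p ^ n"
proof -
  let ?x = "real p"
  define s where "s = (?x ^ 2 + ?x + 1) / ?x ^ 2"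
  define t where "t = (?x + 1) / ?x ^ 2"
  have x: "2 \<le> ?x"
    using prime_ge_2_nat[OF p] by simp
  have "2 * ?x \<le> ?x * ?x"
    using x by (intro mult_right_mono) auto
  then have "?x ^ 2 + 2 * ?x + 2 \<le> 3 * ?x ^ 2"
    unfolding power2_eq_square using x by linarith
  moreover have "s + t = (?x ^ 2 + 2 * ?x + 2) / ?x ^ 2"
    unfolding s_def t_def add_divide_distrib[symmetric] by (simp add: algebra_simps)
  ultimately have st: "s + t \<le> 3"
    using x by (simp add: pos_divide_le_eq)
  have st0: "0 \<le> s" "0 \<le> t"
    by (simp_all add: s_def t_def)
  have pk: "?x ^ n \<le> ?x ^ k"
    using x \<open>n \<le> k\<close> by (intro power_increasing) auto
  have "real (commuting_count p n) / ?x ^ (6 * n) = s - t / ?x ^ n"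
    unfolding commuting_density_eq[OF p] s_def t_def by (simp add: power_add power2_eq_square mult.commute)
  moreover have "sigma_main p = s"
    unfolding s_def by (rule sigma_main_eq[OF prime_gt_1_nat[OF p]])
  ultimately have "real (commuting_count p n) / ?x ^ (6 * n) - sigma_main p * (1 - 1 / ?x ^ k)
        = s / ?x ^ k - t / ?x ^ n"
    by (simp add: right_diff_distrib)
  also have "\<bar>\<dots>\<bar> \<le> s / ?x ^ k + t / ?x ^ n"
    using st0 x by (simp add: abs_le_iff)
  also have "\<dots> \<le> s / ?x ^ n + t / ?x ^ n"
    using st0 pk x by (intro add_right_mono divide_left_mono) auto
  also have "\<dots> \<le> 3 / ?x ^ n"
    using st x by (simp add: add_divide_distrib[symmetric] divide_right_mono)
  finally show ?thesis .
qed

lemma inverse_power_le_powr_half: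
  assumes "1 \<le> (x::real)"
  shows "1 / x ^ n \<le> x powr (- real n / 2)"
proof -
  have "x powr (real n / 2) \<le> x ^ n"
    using assms by (simp add: powr_realpow[symmetric] powr_mono)
  moreover have "x powr (- real n / 2) = 1 / x powr (real n / 2)"
    by (simp add: powr_minus_divide)
  ultimately show ?thesis
    using assms by (simp add: frac_le)
qed

lemma commuting_density_tendsto:
  assumes "prime p"
  shows "(\<lambda>n. real (commuting_count p n) / real p ^ (6 * n)) \<longlonglongrightarrow> sigma_main p"
proof -
  have "(\<lambda>n. (real p + 1) / real p ^ 2 / real p ^ n) \<longlonglongrightarrow> 0"
    by (rule LIMSEQ_divide_realpow_zero) (use assms prime_gt_1_nat in simp)
  then have "(\<lambda>n. (real p + 1) / real p ^ (n + 2)) \<longlonglongrightarrow> 0"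
    unfolding power_add by (simp only: divide_divide_eq_left mult.commute)
  then have "(\<lambda>n. sigma_main p - (real p + 1) / real p ^ (n + 2)) \<longlonglongrightarrow> sigma_main p - 0"
    by (intro tendsto_diff tendsto_const)
  then show ?thesis
    unfolding commuting_density_eq_sigma_main[OF assms] by simp
qed

theorem theorem1p3:
  shows "(\<exists>C::real. \<forall>p n::nat. prime p \<longrightarrow> n \<ge> 1 \<longrightarrow>
            \<bar>real (commuting_count p n) / real p ^ (6 * n)
              - sigma_main p * (1 - 1 / real p ^ (2 * nat \<lceil>real n / 2\<rceil>))\<bar>
            \<le> C * real n ^ 2 * real p powr (- real n / 2))
       \<and> (\<forall>p::nat. prime p \<longrightarrow>
            (\<lambda>n. real (commuting_count p n) / real p ^ (6 * n)) \<longlonglongrightarrow> sigma_main p)"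
proof (intro conjI exI[of _ 3] allI impI)
  fix p n :: nat
  assume p: "prime p" and n: "n \<ge> 1"
  have "n \<le> 2 * nat \<lceil>real n / 2\<rceil>"
    using le_of_int_ceiling[of "real n / 2"] by linarith
  then have "\<bar>real (commuting_count p n) / real p ^ (6 * n)
              - sigma_main p * (1 - 1 / real p ^ (2 * nat \<lceil>real n / 2\<rceil>))\<bar> \<le> 3 / real p ^ n"
    by (rule commuting_density_error[OF p])
  also have "\<dots> \<le> 3 * real n ^ 2 * real p powr (- real n / 2)"
  proof -
    have "1 / real p ^ n \<le> real p powr (- real n / 2)"
      by (rule inverse_power_le_powr_half) (use prime_ge_1_nat[OF p] in simp)
    also have "\<dots> \<le> real n ^ 2 * real p powr (- real n / 2)"
      using n by (simp add: mult_le_cancel_right1)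
    finally show ?thesis
      by simp
  qed
  finally show "\<bar>real (commuting_count p n) / real p ^ (6 * n)
              - sigma_main p * (1 - 1 / real p ^ (2 * nat \<lceil>real n / 2\<rceil>))\<bar>
            \<le> 3 * real n ^ 2 * real p powr (- real n / 2)" .
next
  fix p :: nat
  assume "prime p"
  then show "(\<lambda>n. real (commuting_count p n) / real p ^ (6 * n)) \<longlonglongrightarrow> sigma_main p"
    by (rule commuting_density_tendsto)
qed

end
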